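(* Let $0<q<1$, $s\ge2$, $\alpha\in\mathbb{R}\setminus\mathbb{Z}_-$. For $j=1,\dots,s-1$ let $a_j>0$, $c_j>0$ be real and $b_j,d_j\in\mathbb{C}$ such that $a_jn+\mathrm{Re}(b_j)\notin\mathbb{Z}_-$ and $c_jn+\mathrm{Re}(d_j)\notin\mathbb{Z}_-$ for all positive integers $n$. Put $A=\dfrac{[a_1]_q\cdots[a_{s-1}]_q}{[c_1]_q\cdots[c_{s-1}]_q}$ and $$\lambda_n=\frac{q^{n+\alpha}\,[n]_{q^{c_1}}\cdots[n]_{q^{c_{s-1}}}}{[n]_q\,[n]_{q^{a_1}}\cdots[n]_{q^{a_{s-1}}}}(q-1).$$ Then, uniformly on compact subsets of $\mathbb{C}$, $$\lim_{n\to+\infty}{}_s\phi_s\!\left(\begin{array}{c}q^{-n},q^{a_1n+b_1},\dots,q^{a_{s-1}n+b_{s-1}}\\ q^{\alpha},q^{c_1n+d_1},\dots,q^{c_{s-1}n+d_{s-1}}\end{array};q,\lambda_n z\right)={}_0\phi_1\!\left(\begin{array}{c}-\\ q^{\alpha}\end{array};q,-Az(q-1)^2q^{\alpha}\right)=(Az)^{\frac{1-\alpha}{2}}\,\Gamma_q(\alpha)\,J^{(2)}_{\alpha-1}\!\left(2(1-q)\sqrt{Az};q\right).$$ For $s=1$ one has, uniformly on compact subsets of $\mathbb{C}$, $$\lim_{n\to+\infty}{}_1\phi_1\!\left(\begin{array}{c}q^{-n}\\ q^{\alpha}\end{array};q,\frac{q^{n+\alpha}}{[n]_q}(q-1)z\right)={}_0\phi_1\!\left(\begin{array}{c}-\\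 q^{\alpha}\end{array};q,-z(q-1)^2q^{\alpha}\right)=z^{\frac{1-\alpha}{2}}\Gamma_q(\alpha)J^{(2)}_{\alpha-1}\!\left(2(1-q)\sqrt z;q\right).$$ (Powers and square roots in the last expressions are taken with principal branches, and the product $(Az)^{\frac{1-\alpha}{2}}J^{(2)}_{\alpha-1}(\cdot)$ is understood as the entire function given by the ${}_0\phi_1$ expression.)
   Context: $\mathbb{Z}_-=\{0,-1,-2,\dots\}$. For $w\in\mathbb{C}$, $q^{w}:=e^{w\ln q}$. For $a\in\mathbb{C}$: $(a;q)_0=1$, $(a;q)_k=\prod_{j=0}^{k-1}(1-aq^{j})$, $(a;q)_\infty=\prod_{j\ge0}(1-aq^{j})$, and $(a_1,\dots,a_r;q)_k=\prod_{i=1}^r(a_i;q)_k$. The $q$-number is $[z]_q=\dfrac{1-q^{z}}{1-q}$, and $[n]_{q^{a}}=\dfrac{1-q^{an}}{1-q^{a}}$. The basic hypergeometric series is $${}_r\phi_s\!\left(\begin{array}{c}a_1,\dots,a_r\\ b_1,\dots,b_s\end{array};q,z\right)=\sum_{k=0}^{\infty}\frac{(a_1,\dots,a_r;q)_k}{(b_1,\dots,b_s;q)_k}(-1)^{(1+s-r)k}q^{(1+s-r)\binom{k}{2}}\frac{z^k}{(q;q)_k};$$ when one numerator parameter is $q^{-n}$ it is a polynomial in $z$ of degree at most $n$; "$-$" denotes an empty parameter list. The $q$-Gamma function is $\Gamma_q(z)=\dfrac{(q;q)_\infty}{(q^{z};q)_\infty}(1-q)^{1-z}$. The $q$-Bessel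 function is $J^{(2)}_{\nu}(x;q)=\dfrac{(q^{\nu+1};q)_\infty}{(q;q)_\infty}\left(\dfrac{x}{2}\right)^{\nu}{}_0\phi_1\!\left(\begin{array}{c}-\\ q^{\nu+1}\end{array};q,-\dfrac{q^{\nu+1}x^2}{4}\right)$. *)

theory Defs
  imports "HOL-Analysis.Analysis"
begin

definition qpow :: "real \<Rightarrow> complex \<Rightarrow> complex" where
  "qpow q w = exp (w * of_real (ln q))"

definition qpoch :: "complex \<Rightarrow> real \<Rightarrow> nat \<Rightarrow> complex" where
  "qpoch a q k = (\<Prod>j<k. 1 - a * of_real q ^ j)"

definition qpochs :: "complex list \<Rightarrow> real \<Rightarrow> nat \<Rightarrow> complex" where
  "qpochs as q k = prod_list (map (\<lambda>a. qpoch a q k) as)"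

definition qpoch_inf :: "complex \<Rightarrow> real \<Rightarrow> complex" where
  "qpoch_inf a q = (\<Prod>j. 1 - a * of_real q ^ j)"

definition bhyp :: "complex list \<Rightarrow> complex list \<Rightarrow> real \<Rightarrow> complex \<Rightarrow> complex" where
  "bhyp as bs q z =
     (\<Sum>k. qpochs as q k / qpochs bs q k
           * ((-1) ^ k * of_real q ^ (k choose 2)) powi (1 + int (length bs) - int (length as))
           * z ^ k / qpoch (of_real q) q k)"

definition qnum :: "real \<Rightarrow> complex \<Rightarrow> complex" where
  "qnum q z = (1 - qpow q z) / (1 - of_real q)"

definition qnum_base :: "real \<Rightarrow> real \<Rightarrow> nat \<Rightarrow> real" where
  "qnum_base q a n = (1 - q powr (a * real n)) / (1 - q powr a)"

definition qGamma :: "real \<Rightarrow> complex \<Rightarrow> complex" where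
  "qGamma q z = qpoch_inf (of_real q) q / qpoch_inf (qpow q z) q * qpow (1 - q) (1 - z)"

definition qBesselJ2 :: "complex \<Rightarrow> complex \<Rightarrow> real \<Rightarrow> complex" where
  "qBesselJ2 \<nu> x q = qpoch_inf (qpow q (\<nu> + 1)) q / qpoch_inf (of_real q) q
      * (x / 2) powr \<nu> * bhyp [] [qpow q (\<nu> + 1)] q (- qpow q (\<nu> + 1) * x ^ 2 / 4)"

end

theory Submission
  imports Defs
begin

text \<open>Both sides are power series in \<open>z\<close>. Write \<open>\<lambda>\<^sub>n = q\<^sup>n \<mu>\<^sub>n\<close>, where
  \<open>\<mu>\<^sub>n \<longrightarrow> -A (q - 1)\<^sup>2 q\<^sup>\<alpha>\<close>. In the \<open>k\<close>-th coefficient of the \<open>s\<phi>s\<close> series the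
  terminating factor \<open>(q\<^sup>-\<^sup>n;q)\<^sub>k \<lambda>\<^sub>n\<^sup>k\<close> equals the real product of the
  \<open>(q\<^sup>n - q\<^sup>j) \<mu>\<^sub>n\<close>, \<open>j < k\<close>, while all other parameters depending on \<open>n\<close> tend to 0.
  So each coefficient converges to the corresponding coefficient of the \<open>0\<phi>1\<close> series, and for
  large \<open>n\<close> all of them are bounded by \<open>D\<^sup>k q\<^sup>k\<^sup>(\<^sup>k\<^sup>-\<^sup>1\<^sup>)\<^sup>/\<^sup>2\<close>, a majorant of
  infinite radius of convergence; Tannery's theorem then gives uniform convergence on bounded
  sets. The Bessel form is the definition of \<open>J\<^sup>(\<^sup>2\<^sup>)\<close> and \<open>\<Gamma>\<^sub>q\<close>, once the
  principal powers are matched through \<open>Ln (csqrt w) = Ln w / 2\<close>.\<close>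

section \<open>Powers of \<open>q\<close> and \<open>q\<close>-numbers\<close>

lemma qpow_of_real: "q > 0 \<Longrightarrow> qpow q (of_real x) = of_real (q powr x)"
  by (simp add: qpow_def powr_def exp_of_real[symmetric] mult.commute)

lemma qpow_linear_eq:
  assumes "q > 0"
  shows "qpow q (of_real (c * real n) + d) = of_real ((q powr c) ^ n) * qpow q d"
proof -
  have "qpow q (of_real (c * real n) + d) = exp (of_real (c * real n * ln q)) * qpow q d"
    unfolding qpow_def by (simp add: distrib_right exp_add)
  also have "exp (of_real (c * real n * ln q)) = (of_real (q powr (c * real n)) :: complex)"
    using assms by (simp only: exp_of_real powr_def) simp
  finally show ?thesis
    using assms by (simp add: powr_powr[symmetric] powr_realpow)
qed

lemma qpow_linear_tendsto_0:
  assumes "0 < q" "q < 1" "c > 0"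
  shows "(\<lambda>n. qpow q (of_real (c * real n) + d)) \<longlonglongrightarrow> 0"
proof -
  have "q powr c < 1"
    using assms powr_less_mono2[of c q 1] by simp
  then have "(\<lambda>n. of_real ((q powr c) ^ n) * qpow q d) \<longlonglongrightarrow> of_real 0 * qpow q d"
    by (intro tendsto_intros LIMSEQ_power_zero) auto
  then show ?thesis
    using qpow_linear_eq[OF assms(1)] by simp
qed

lemma qpow_mult_power_neq_1:
  assumes "0 < q" "q < 1" "\<alpha> \<notin> \<int>\<^sub>\<le>\<^sub>0"
  shows "qpow q (of_real \<alpha>) * of_real q ^ j \<noteq> 1"
proof -
  have "\<alpha> + real j \<noteq> 0"
  proof
    assume "\<alpha> + real j = 0"
    then have "\<alpha> = - of_nat j" by simp
    with assms(3) show False by auto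
  qed
  then have "q powr (\<alpha> + real j) \<noteq> 1"
    using assms by (simp add: powr_eq_one_iff_gen)
  then have "q powr \<alpha> * q ^ j \<noteq> 1"
    using assms by (simp add: powr_add powr_realpow)
  then show ?thesis
    using assms(1) by (simp add: qpow_of_real) (metis of_real_1 of_real_eq_iff of_real_mult of_real_power)
qed

lemma of_real_mult_power_neq_1: "0 < q \<Longrightarrow> q < 1 \<Longrightarrow> of_real q * of_real q ^ j \<noteq> (1::complex)"
  using qpow_mult_power_neq_1[of q 1] qpow_of_real[of q 1] by simp

lemma Re_qnum_of_real: "0 < q \<Longrightarrow> Re (qnum q (of_real x)) = (1 - q powr x) / (1 - q)"
  unfolding qnum_def by (simp add: qpow_of_real)

lemma Re_qnum_pos: "0 < q \<Longrightarrow> q < 1 \<Longrightarrow> x > 0 \<Longrightarrow> Re (qnum q (of_real x)) > 0"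
  using powr_less_mono2[of x q 1] by (simp add: Re_qnum_of_real)

lemma qnum_base_ratio_tendsto:
  assumes q: "0 < q" "q < 1" and "a > 0" "c > 0"
  shows "(\<lambda>n. qnum_base q c n / qnum_base q a n)
     \<longlonglongrightarrow> Re (qnum q (of_real a)) / Re (qnum q (of_real c))"
proof -
  have lim: "(\<lambda>n. qnum_base q x n) \<longlonglongrightarrow> 1 / (1 - q powr x)" if "x > 0" for x
  proof -
    have "q powr x < 1"
      using q that powr_less_mono2[of x q 1] by simp
    then have "(\<lambda>n. (1 - (q powr x) ^ n) / (1 - q powr x)) \<longlonglongrightarrow> (1 - 0) / (1 - q powr x)"
      using q by (intro tendsto_intros LIMSEQ_power_zero) auto
    then show ?thesis
      unfolding qnum_base_def using q by (simp add: powr_powr[symmetric] powr_realpow)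
  qed
  have "q powr a < 1"
    using q assms(3) powr_less_mono2[of a q 1] by simp
  then have "(\<lambda>n. qnum_base q c n / qnum_base q a n) \<longlonglongrightarrow> (1 / (1 - q powr c)) / (1 / (1 - q powr a))"
    by (intro tendsto_divide lim assms) auto
  then show ?thesis
    using q by (simp add: Re_qnum_of_real)
qed

lemma Re_qnum_of_nat_tendsto: "0 < q \<Longrightarrow> q < 1 \<Longrightarrow> (\<lambda>n. Re (qnum q (of_nat n))) \<longlonglongrightarrow> 1 / (1 - q)"
  using Re_qnum_of_real[of q "real n" for n]
  by (auto simp: powr_realpow intro!: tendsto_eq_intros LIMSEQ_power_zero)

lemma Suc_choose_2: "Suc k choose 2 = (k choose 2) + k"
  by (simp add: numeral_2_eq_2)

lemma prod_power_eq_power_choose_2: "(\<Prod>j<k. (x::'a::comm_monoid_mult) ^ j) = x ^ (k choose 2)"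
proof (induction k)
  case (Suc k)
  then show ?case
    by (simp add: Suc_choose_2 power_add)
qed (simp add: numeral_2_eq_2)

lemma summable_power_mult_power_choose_2:
  fixes q X :: real
  assumes "0 < q" "q < 1"
  shows "summable (\<lambda>k. X ^ k * q ^ (k choose 2))"
proof -
  have "(\<lambda>k. \<bar>X\<bar> * q ^ k) \<longlonglongrightarrow> \<bar>X\<bar> * 0"
    using assms by (intro tendsto_intros LIMSEQ_power_zero) auto
  then have "eventually (\<lambda>k. \<bar>X\<bar> * q ^ k < 1/2) sequentially"
    by (intro order_tendstoD) auto
  then obtain N where N: "\<And>k. k \<ge> N \<Longrightarrow> \<bar>X\<bar> * q ^ k < 1/2"
    unfolding eventually_sequentially by blast
  show ?thesis
  proof (rule summable_ratio_test[of "1/2" N])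
    fix k assume "N \<le> k"
    have "norm (X ^ Suc k * q ^ (Suc k choose 2)) = (\<bar>X\<bar> * q ^ k) * norm (X ^ k * q ^ (k choose 2))"
      using assms by (simp add: Suc_choose_2 power_add abs_mult power_abs algebra_simps)
    also have "\<dots> \<le> 1/2 * norm (X ^ k * q ^ (k choose 2))"
      using N[OF \<open>N \<le> k\<close>] by (intro mult_right_mono) auto
    finally show "norm (X ^ Suc k * q ^ (Suc k choose 2)) \<le> 1/2 * norm (X ^ k * q ^ (k choose 2))" .
  qed simp
qed

section \<open>\<open>q\<close>-Pochhammer symbols\<close>

lemma qpoch_tendsto_1:
  assumes "(f \<longlongrightarrow> 0) F"
  shows "((\<lambda>n. qpoch (f n) q k) \<longlongrightarrow> 1) F"
proof -
  have "((\<lambda>n. \<Prod>j<k. 1 - f n * of_real q ^ j) \<longlongrightarrow> (\<Prod>j<k. 1 - 0 * of_real q ^ j)) F"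
    by (intro tendsto_intros assms)
  then show ?thesis
    unfolding qpoch_def by simp
qed

lemma norm_qpoch_le:
  assumes "0 \<le> q" "q \<le> 1"
  shows "norm (qpoch w q k) \<le> (1 + norm w) ^ k"
proof -
  have "norm (1 - w * of_real q ^ j) \<le> 1 + norm w" for j
  proof -
    have "norm (w * of_real q ^ j) \<le> norm w"
      using assms by (simp add: norm_mult norm_power mult_left_le power_le_one)
    then show ?thesis
      using norm_triangle_ineq4[of 1 "w * of_real q ^ j"] by simp
  qed
  then have "(\<Prod>j<k. norm (1 - w * of_real q ^ j)) \<le> (\<Prod>j<k. 1 + norm w)"
    by (intro prod_mono) auto
  then show ?thesis
    unfolding qpoch_def by (simp add: prod_norm)
qed

lemma norm_qpoch_ge_power:
  assumes "\<And>j. j < k \<Longrightarrow> \<delta> \<le> norm (1 - w * of_real q ^ j)" and "0 \<le> \<delta>"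
  shows "\<delta> ^ k \<le> norm (qpoch w q k)"
proof -
  have "(\<Prod>j<k. \<delta>) \<le> (\<Prod>j<k. norm (1 - w * of_real q ^ j))"
    using assms by (intro prod_mono) auto
  then show ?thesis
    unfolding qpoch_def by (simp add: prod_norm)
qed

lemma norm_qpoch_ge:
  assumes "0 \<le> q" "q \<le> 1" "norm w \<le> 1"
  shows "(1 - norm w) ^ k \<le> norm (qpoch w q k)"
proof (rule norm_qpoch_ge_power)
  fix j
  have "norm (w * of_real q ^ j) \<le> norm w"
    using assms by (simp add: norm_mult norm_power mult_left_le power_le_one)
  then show "1 - norm w \<le> norm (1 - w * of_real q ^ j)"
    using norm_triangle_ineq2[of 1 "w * of_real q ^ j"] by simp
qed (use assms in simp)

text \<open>All but finitely many factors of \<open>(w;q)\<^sub>k\<close> have modulus at least \<open>1/2\<close>, and the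
  remaining ones are nonzero.\<close>
lemma qpoch_geometric_lower_bound:
  assumes q: "0 < q" "q < 1" and nz: "\<And>j. w * of_real q ^ j \<noteq> 1"
  obtains \<delta> where "\<delta> > 0" "\<And>k. \<delta> ^ k \<le> norm (qpoch w q k)"
proof -
  have "(\<lambda>j. w * of_real q ^ j) \<longlonglongrightarrow> w * 0"
    using q by (intro tendsto_intros LIMSEQ_power_zero) auto
  then have "eventually (\<lambda>j. norm (w * of_real q ^ j) < 1/2) sequentially"
    by (intro order_tendstoD) (auto intro: tendsto_norm_zero)
  then obtain N where N: "\<And>j. j \<ge> N \<Longrightarrow> norm (w * of_real q ^ j) < 1/2"
    unfolding eventually_sequentially by blast
  define \<delta> where "\<delta> = Min (insert (1/2) ((\<lambda>j. norm (1 - w * of_real q ^ j)) ` {..<N}))"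
  have "\<delta> > 0"
    unfolding \<delta>_def using nz by (subst Min_gr_iff) auto
  moreover have "\<delta> \<le> norm (1 - w * of_real q ^ j)" for j
  proof (cases "j < N")
    case True
    then show ?thesis unfolding \<delta>_def by (intro Min_le) auto
  next
    case False
    then have "1/2 \<le> norm (1 - w * of_real q ^ j)"
      using N[of j] norm_triangle_ineq2[of 1 "w * of_real q ^ j"] by simp
    moreover have "\<delta> \<le> 1/2" unfolding \<delta>_def by (intro Min_le) auto
    ultimately show ?thesis by linarith
  qed
  ultimately show ?thesis
    using that norm_qpoch_ge_power[of _ \<delta>] by (meson less_imp_le)
qed

lemma qpoch_inf_nonzero:
  assumes q: "0 < q" "q < 1" and nz: "\<And>j. w * of_real q ^ j \<noteq> 1"
  shows "qpoch_inf w q \<noteq> 0"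
proof -
  have "summable (\<lambda>j. norm (- w * of_real q ^ j))"
    using q by (simp add: norm_mult norm_power summable_mult summable_geometric)
  then have "convergent_prod (\<lambda>j. 1 + (- w * of_real q ^ j))"
    by (rule summable_imp_convergent_prod_complex) (use nz in auto)
  then show ?thesis
    unfolding qpoch_inf_def by (intro prodinf_nonzero) (use nz in auto)
qed

lemma qpochs_Nil [simp]: "qpochs [] q k = 1"
  by (simp add: qpochs_def)

lemma qpochs_Cons [simp]: "qpochs (a # as) q k = qpoch a q k * qpochs as q k"
  by (simp add: qpochs_def)

lemma qpochs_map_tendsto_1:
  assumes "\<And>j. j \<in> set js \<Longrightarrow> (f j \<longlongrightarrow> 0) F"
  shows "((\<lambda>n. qpochs (map (\<lambda>j. f j n) js) q k) \<longlongrightarrow> 1) F"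
  using assms
proof (induction js)
  case (Cons j js)
  then have "((\<lambda>n. qpoch (f j n) q k * qpochs (map (\<lambda>j. f j n) js) q k) \<longlongrightarrow> 1 * 1) F"
    by (intro tendsto_mult qpoch_tendsto_1) auto
  then show ?case by simp
qed simp

lemma norm_qpochs_le:
  assumes "0 \<le> q" "q \<le> 1" "\<forall>a\<in>set as. norm a \<le> 1"
  shows "norm (qpochs as q k) \<le> (2 ^ length as) ^ k"
  using assms(3)
proof (induction as)
  case (Cons a as)
  have "norm (qpoch a q k) \<le> 2 ^ k"
    using norm_qpoch_le[OF assms(1,2), of a k] Cons.prems power_mono[of "1 + norm a" 2 k] by simp
  with Cons show ?case
    by (simp add: norm_mult power_mult_distrib mult_mono)
qed simp

lemma norm_qpochs_ge:
  assumes "0 \<le> q" "q \<le> 1" "\<forall>a\<in>set as. norm a \<le> 1/2"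
  shows "(1 / 2 ^ length as) ^ k \<le> norm (qpochs as q k)"
  using assms(3)
proof (induction as)
  case (Cons a as)
  have head: "(1/2) ^ k \<le> norm (qpoch a q k)"
    using norm_qpoch_ge[OF assms(1,2), of a k] Cons.prems power_mono[of "1/2" "1 - norm a" k] by simp
  have "(1 / 2 ^ length (a # as)) ^ k = (1/2) ^ k * (1 / 2 ^ length as :: real) ^ k"
    by (simp flip: power_mult_distrib)
  also have "\<dots> \<le> norm (qpoch a q k) * norm (qpochs as q k)"
    using head Cons by (intro mult_mono) auto
  finally show ?case
    by (simp add: norm_mult)
qed simp

lemma qpoch_qpow_neg_nat_scaled:
  assumes "0 < q"
  shows "qpoch (qpow q (- of_nat n)) q k * of_real (q ^ n * \<mu>) ^ k
       = of_real (\<Prod>j<k. (q ^ n - q ^ j) * \<mu>)"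
proof -
  have "qpow q (- of_nat n) = of_real (inverse (q ^ n))"
    using qpow_of_real[OF assms, of "- real n"] assms by (simp add: powr_minus powr_realpow)
  then have "qpoch (qpow q (- of_nat n)) q k * of_real (q ^ n * \<mu>) ^ k
      = of_real (\<Prod>j<k. (1 - inverse (q ^ n) * q ^ j) * (q ^ n * \<mu>))"
    unfolding qpoch_def by (simp add: prod.distrib)
  also have "(\<Prod>j<k. (1 - inverse (q ^ n) * q ^ j) * (q ^ n * \<mu>)) = (\<Prod>j<k. (q ^ n - q ^ j) * \<mu>)"
    using assms by (intro prod.cong refl) (simp add: field_simps)
  finally show ?thesis .
qed

lemma abs_prod_power_diff_le:
  fixes q \<mu> L :: real
  assumes "0 < q" "q < 1" "\<bar>\<mu>\<bar> \<le> L"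
  shows "\<bar>\<Prod>j<k. (q ^ n - q ^ j) * \<mu>\<bar> \<le> q ^ (k choose 2) * L ^ k"
proof (cases "k \<le> n")
  case True
  have "\<bar>q ^ n - q ^ j\<bar> * \<bar>\<mu>\<bar> \<le> q ^ j * L" if "j < k" for j
  proof -
    have "q ^ n \<le> q ^ j"
      using that True assms by (intro power_decreasing) auto
    then have "\<bar>q ^ n - q ^ j\<bar> \<le> q ^ j"
      using assms by simp
    then show ?thesis
      using assms by (intro mult_mono) auto
  qed
  then have "(\<Prod>j<k. \<bar>q ^ n - q ^ j\<bar> * \<bar>\<mu>\<bar>) \<le> (\<Prod>j<k. q ^ j * L)"
    by (intro prod_mono) auto
  then show ?thesis
    by (simp add: abs_prod abs_mult power_abs prod.distrib prod_power_eq_power_choose_2)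
next
  case False
  then have zero: "(\<Prod>j<k. (q ^ n - q ^ j) * \<mu>) = 0"
    by (intro prod_zero) auto
  show ?thesis
    unfolding zero using assms by simp
qed

section \<open>Power series with converging coefficients\<close>

lemma norm_limit_le_eventual_bound:
  assumes "(\<lambda>n. c n k) \<longlonglongrightarrow> L" and "eventually (\<lambda>n. \<forall>k. norm (c n k) \<le> M k) sequentially"
  shows "norm L \<le> M k"
proof (rule tendsto_upperbound)
  show "(\<lambda>n. norm (c n k)) \<longlonglongrightarrow> norm L"
    using assms(1) by (rule tendsto_norm)
  show "eventually (\<lambda>n. norm (c n k) \<le> M k) sequentially"
    using assms(2) by (rule eventually_mono) auto
qed simp

lemma dist_power_series_le:
  fixes c L :: "nat \<Rightarrow> 'a::{real_normed_field,banach}"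
  assumes c: "\<And>k. norm (c k) \<le> M k" and L: "\<And>k. norm (L k) \<le> M k"
    and M: "summable (\<lambda>k. M k * R ^ k)" and z: "norm z \<le> R"
  shows "dist (\<Sum>k. c k * z ^ k) (\<Sum>k. L k * z ^ k) \<le> (\<Sum>k. norm (c k - L k) * R ^ k)"
proof -
  have zR: "norm (z ^ k) \<le> R ^ k" for k
    using z by (simp add: norm_power power_mono)
  have "0 \<le> M k" for k
    using c[of k] norm_ge_zero order.trans by blast
  then have "norm (c k * z ^ k) \<le> M k * R ^ k" "norm (L k * z ^ k) \<le> M k * R ^ k" for k
    unfolding norm_mult using c L zR by (auto intro!: mult_mono)
  then have sc: "summable (\<lambda>k. c k * z ^ k)" and sL: "summable (\<lambda>k. L k * z ^ k)"
    by (auto intro: summable_comparison_test'[OF M])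
  have diff_le: "norm (norm (c k - L k) * R ^ k) \<le> 2 * M k * R ^ k" for k
  proof -
    have "norm (c k - L k) \<le> 2 * M k"
      using norm_triangle_ineq4[of "c k" "L k"] c[of k] L[of k] by linarith
    moreover have "R \<ge> 0"
      using z norm_ge_zero[of z] by linarith
    ultimately show ?thesis
      by (simp add: abs_mult mult_right_mono)
  qed
  have "summable (\<lambda>k. 2 * M k * R ^ k)"
    using summable_mult[OF M, of 2] by (simp add: mult.assoc)
  then have sE: "summable (\<lambda>k. norm (c k - L k) * R ^ k)"
    by (rule summable_comparison_test') (rule diff_le)
  have term_le: "norm ((c k - L k) * z ^ k) \<le> norm (c k - L k) * R ^ k" for k
    unfolding norm_mult using zR by (intro mult_left_mono) auto
  then have sd: "summable (\<lambda>k. norm ((c k - L k) * z ^ k))"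
    by (intro summable_comparison_test'[OF sE]) simp
  have "dist (\<Sum>k. c k * z ^ k) (\<Sum>k. L k * z ^ k) = norm (\<Sum>k. (c k - L k) * z ^ k)"
    by (simp add: dist_norm suminf_diff[OF sc sL] left_diff_distrib)
  also have "\<dots> \<le> (\<Sum>k. norm ((c k - L k) * z ^ k))"
    using sd by (rule summable_norm)
  also have "\<dots> \<le> (\<Sum>k. norm (c k - L k) * R ^ k)"
    using term_le sd sE by (rule suminf_le)
  finally show ?thesis .
qed

lemma tendsto_weighted_coeff_distance_0:
  fixes c :: "nat \<Rightarrow> nat \<Rightarrow> 'a::real_normed_vector"
  assumes lim: "\<And>k. (\<lambda>n. c n k) \<longlonglongrightarrow> L k"
    and bound: "eventually (\<lambda>n. \<forall>k. norm (c n k) \<le> M k) sequentially"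
    and M: "summable (\<lambda>k. M k * R ^ k)" and "R \<ge> 0"
  shows "(\<lambda>n. \<Sum>k. norm (c n k - L k) * R ^ k) \<longlonglongrightarrow> 0"
proof -
  have dominated: "\<bar>norm (c n k - L k) * R ^ k\<bar> \<le> 2 * M k * R ^ k"
    if "\<forall>k. norm (c n k) \<le> M k" for n k
  proof -
    have "norm (c n k - L k) \<le> 2 * M k"
      using that[rule_format, of k] norm_triangle_ineq4[of "c n k" "L k"]
        norm_limit_le_eventual_bound[OF lim bound, of k] by linarith
    then show ?thesis
      using \<open>R \<ge> 0\<close> by (simp add: abs_mult mult_right_mono)
  qed
  have "eventually (\<lambda>x. \<forall>k. norm (c (snd x) k) \<le> M k) (at_top \<times>\<^sub>F sequentially)"
    using eventually_prodI[of "\<lambda>_. True" at_top, OF _ bound] by simp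
  then have ev: "eventually (\<lambda>(k, n). norm (norm (c n k - L k) * R ^ k) \<le> 2 * M k * R ^ k)
      (at_top \<times>\<^sub>F sequentially)"
    by (rule eventually_mono) (auto intro: dominated)
  have sm: "summable (\<lambda>k. 2 * M k * R ^ k)"
    using summable_mult[OF M, of 2] by (simp add: mult.assoc)
  have "(\<lambda>n. norm (c n k - L k) * R ^ k) \<longlonglongrightarrow> 0" for k
    using LIM_zero[OF lim[of k]] by (intro tendsto_mult_left_zero tendsto_norm_zero)
  from tannerys_theorem[OF this ev sm] show ?thesis
    by simp
qed

lemma uniform_limit_power_series_coeffwise:
  fixes c :: "nat \<Rightarrow> nat \<Rightarrow> 'a::{real_normed_field,banach}" and M :: "nat \<Rightarrow> real"
  assumes lim: "\<And>k. (\<lambda>n. c n k) \<longlonglongrightarrow> L k"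
    and bound: "eventually (\<lambda>n. \<forall>k. norm (c n k) \<le> M k) sequentially"
    and summable: "\<And>R. summable (\<lambda>k. M k * R ^ k)"
    and K: "bounded K"
  shows "uniform_limit K (\<lambda>n z. \<Sum>k. c n k * z ^ k) (\<lambda>z. \<Sum>k. L k * z ^ k) sequentially"
proof (rule uniform_limitI)
  fix e :: real assume "e > 0"
  obtain R where R: "R \<ge> 0" "\<And>z. z \<in> K \<Longrightarrow> norm z \<le> R"
    using K unfolding bounded_iff by (meson norm_ge_zero order.trans)
  have "(\<lambda>n. \<Sum>k. norm (c n k - L k) * R ^ k) \<longlonglongrightarrow> 0"
    using lim bound summable R(1) by (rule tendsto_weighted_coeff_distance_0)
  then have "eventually (\<lambda>n. (\<Sum>k. norm (c n k - L k) * R ^ k) < e) sequentially"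
    using \<open>e > 0\<close> by (rule order_tendstoD)
  with bound show "eventually (\<lambda>n. \<forall>z\<in>K. dist (\<Sum>k. c n k * z ^ k) (\<Sum>k. L k * z ^ k) < e)
      sequentially"
  proof eventually_elim
    case (elim n)
    then show ?case
      using dist_power_series_le[OF _ norm_limit_le_eventual_bound[OF lim bound] summable R(2)]
      by (auto intro: le_less_trans)
  qed
qed

section \<open>The confluent limit of the terminating series\<close>

definition bhyp_coeff :: "complex list \<Rightarrow> complex list \<Rightarrow> real \<Rightarrow> nat \<Rightarrow> complex" where
  "bhyp_coeff as bs q k = qpochs as q k / qpochs bs q k
     * ((-1) ^ k * of_real q ^ (k choose 2)) powi (1 + int (length bs) - int (length as))
     / qpoch (of_real q) q k"

lemma bhyp_eq_suminf_coeff: "bhyp as bs q z = (\<Sum>k. bhyp_coeff as bs q k * z ^ k)"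
  unfolding bhyp_def bhyp_coeff_def by (simp add: divide_inverse ac_simps)

lemma bhyp_coeff_0phi1:
  "bhyp_coeff [] [w] q k = (of_real q ^ (k choose 2))\<^sup>2 / (qpoch w q k * qpoch (of_real q) q k)"
  unfolding bhyp_coeff_def by (simp add: power_mult_distrib divide_inverse flip: power_mult)

lemma bhyp_coeff_qpow_neg_nat_scaled:
  assumes "0 < q" "length as = length bs"
  shows "bhyp_coeff (qpow q (- of_nat n) # as) (w # bs) q k * of_real (q ^ n * \<mu>) ^ k
    = of_real (\<Prod>j<k. (q ^ n - q ^ j) * \<mu>) * (qpochs as q k / qpochs bs q k)
      * ((-1) ^ k * of_real q ^ (k choose 2) / (qpoch w q k * qpoch (of_real q) q k))"
proof -
  have "bhyp_coeff (qpow q (- of_nat n) # as) (w # bs) q k * of_real (q ^ n * \<mu>) ^ k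
    = (qpoch (qpow q (- of_nat n)) q k * of_real (q ^ n * \<mu>) ^ k) * (qpochs as q k / qpochs bs q k)
      * ((-1) ^ k * of_real q ^ (k choose 2) / (qpoch w q k * qpoch (of_real q) q k))"
    using assms(2) unfolding bhyp_coeff_def by (simp add: divide_inverse ac_simps)
  then show ?thesis
    by (simp only: qpoch_qpow_neg_nat_scaled[OF assms(1)])
qed

lemma norm_bhyp_coeff_qpow_neg_nat_scaled_le:
  assumes q: "0 < q" "q < 1" and "length as = length bs"
    and \<mu>: "\<bar>\<mu>\<bar> \<le> L" and as: "\<forall>a\<in>set as. norm a \<le> 1" and bs: "\<forall>b\<in>set bs. norm b \<le> 1/2"
    and \<delta>: "\<delta> > 0" "\<delta> ^ k \<le> norm (qpoch w q k * qpoch (of_real q) q k)"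
  shows "norm (bhyp_coeff (qpow q (- of_nat n) # as) (w # bs) q k * of_real (q ^ n * \<mu>) ^ k)
    \<le> (4 ^ length as * L / \<delta>) ^ k * q ^ (k choose 2)"
proof -
  have "norm (bhyp_coeff (qpow q (- of_nat n) # as) (w # bs) q k * of_real (q ^ n * \<mu>) ^ k)
      = \<bar>\<Prod>j<k. (q ^ n - q ^ j) * \<mu>\<bar> * (norm (qpochs as q k) / norm (qpochs bs q k))
        * (q ^ (k choose 2) / norm (qpoch w q k * qpoch (of_real q) q k))"
    using q assms(3) by (subst bhyp_coeff_qpow_neg_nat_scaled)
      (simp_all add: norm_mult norm_divide norm_power del: of_real_prod)
  also have "\<dots> \<le> (q ^ (k choose 2) * L ^ k) * ((2 ^ length as) ^ k / (1 / 2 ^ length as) ^ k) * (1 / \<delta> ^ k)"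
  proof -
    have "\<bar>\<Prod>j<k. (q ^ n - q ^ j) * \<mu>\<bar> \<le> q ^ (k choose 2) * L ^ k"
      using q \<mu> by (rule abs_prod_power_diff_le)
    moreover have "norm (qpochs as q k) / norm (qpochs bs q k) \<le> (2 ^ length as) ^ k / (1 / 2 ^ length as) ^ k"
      using q as bs assms(3) norm_qpochs_le[of q as k] norm_qpochs_ge[of q bs k] by (intro frac_le) auto
    moreover have "q ^ (k choose 2) / norm (qpoch w q k * qpoch (of_real q) q k) \<le> 1 / \<delta> ^ k"
      using q \<delta> by (intro frac_le) (auto simp: power_le_one)
    ultimately show ?thesis
      using q \<mu> by (intro mult_mono) auto
  qed
  also have "\<dots> = (4 ^ length as * L / \<delta>) ^ k * q ^ (k choose 2)"
  proof -
    have "(4 :: real) ^ length as = 2 ^ length as * 2 ^ length as"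
      by (simp flip: power_mult_distrib)
    then show ?thesis
      by (simp add: power_mult_distrib power_divide field_simps)
  qed
  finally show ?thesis .
qed

lemma eventually_norm_le_of_tendsto_0:
  assumes "\<And>j. j \<in> set js \<Longrightarrow> f j \<longlonglongrightarrow> 0" "\<epsilon> > 0"
  shows "eventually (\<lambda>n. \<forall>j\<in>set js. norm (f j n) \<le> \<epsilon>) sequentially"
proof (intro eventually_ball_finite ballI)
  fix j assume "j \<in> set js"
  then have "(\<lambda>n. norm (f j n)) \<longlonglongrightarrow> 0"
    using assms(1) tendsto_norm_zero by blast
  then have "eventually (\<lambda>n. norm (f j n) < \<epsilon>) sequentially"
    using assms(2) by (rule order_tendstoD)
  then show "eventually (\<lambda>n. norm (f j n) \<le> \<epsilon>) sequentially"
    by eventually_elim simp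
qed simp

context
  fixes q muL :: real and w :: complex and js :: "'j list"
    and an dn :: "'j \<Rightarrow> nat \<Rightarrow> complex" and \<mu> :: "nat \<Rightarrow> real"
  assumes q: "0 < q" "q < 1"
    and w: "\<And>j. w * of_real q ^ j \<noteq> 1"
    and an: "\<And>j. j \<in> set js \<Longrightarrow> an j \<longlonglongrightarrow> 0"
    and dn: "\<And>j. j \<in> set js \<Longrightarrow> dn j \<longlonglongrightarrow> 0"
    and \<mu>: "\<mu> \<longlonglongrightarrow> muL"
begin

lemma bhyp_coeff_confluent_tendsto:
  "(\<lambda>n. bhyp_coeff (qpow q (- of_nat n) # map (\<lambda>j. an j n) js) (w # map (\<lambda>j. dn j n) js) q k
        * of_real (q ^ n * \<mu> n) ^ k)
   \<longlonglongrightarrow> bhyp_coeff [] [w] q k * of_real muL ^ k"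
proof -
  define S where "S = (-1) ^ k * of_real q ^ (k choose 2) / (qpoch w q k * qpoch (of_real q) q k)"
  have "(\<lambda>n. \<Prod>j<k. (q ^ n - q ^ j) * \<mu> n) \<longlonglongrightarrow> (\<Prod>j<k. (0 - q ^ j) * muL)"
    using q by (intro tendsto_prod tendsto_mult tendsto_diff LIMSEQ_power_zero tendsto_const \<mu>) auto
  moreover have "(\<lambda>n. qpochs (map (\<lambda>j. an j n) js) q k / qpochs (map (\<lambda>j. dn j n) js) q k) \<longlonglongrightarrow> 1 / 1"
    by (intro tendsto_divide qpochs_map_tendsto_1 an dn) auto
  ultimately have "(\<lambda>n. of_real (\<Prod>j<k. (q ^ n - q ^ j) * \<mu> n)
          * (qpochs (map (\<lambda>j. an j n) js) q k / qpochs (map (\<lambda>j. dn j n) js) q k) * S)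
      \<longlonglongrightarrow> of_real (\<Prod>j<k. (0 - q ^ j) * muL) * (1 / 1) * S"
    by (intro tendsto_mult tendsto_of_real tendsto_const)
  moreover have "(\<Prod>j<k. (0 - q ^ j) * muL) = (-1) ^ k * muL ^ k * q ^ (k choose 2)"
  proof -
    have "(\<Prod>j<k. (0 - q ^ j) * muL) = (\<Prod>j<k. - muL * q ^ j)"
      by (rule prod.cong) auto
    also have "\<dots> = (\<Prod>j<k. - muL) * (\<Prod>j<k. q ^ j)"
      by (rule prod.distrib)
    finally show ?thesis
      by (simp add: prod_power_eq_power_choose_2 power_minus[of muL])
  qed
  then have "of_real (\<Prod>j<k. (0 - q ^ j) * muL) * (1 / 1) * S
      = ((-1) ^ k * (-1) ^ k) * (bhyp_coeff [] [w] q k * of_real muL ^ k)"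
    unfolding S_def bhyp_coeff_0phi1 by (simp add: power2_eq_square divide_inverse)
  moreover have "((-1) ^ k * (-1) ^ k :: complex) = 1"
    by (simp flip: power_mult_distrib)
  moreover have "bhyp_coeff (qpow q (- of_nat n) # map (\<lambda>j. an j n) js) (w # map (\<lambda>j. dn j n) js) q k
        * of_real (q ^ n * \<mu> n) ^ k
      = of_real (\<Prod>j<k. (q ^ n - q ^ j) * \<mu> n)
        * (qpochs (map (\<lambda>j. an j n) js) q k / qpochs (map (\<lambda>j. dn j n) js) q k) * S" for n
    unfolding S_def by (rule bhyp_coeff_qpow_neg_nat_scaled[OF q(1)]) simp
  ultimately show ?thesis
    by simp
qed

lemma bhyp_coeff_confluent_bound:
  obtains D where "eventually (\<lambda>n. \<forall>k.
      norm (bhyp_coeff (qpow q (- of_nat n) # map (\<lambda>j. an j n) js) (w # map (\<lambda>j. dn j n) js) q k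
            * of_real (q ^ n * \<mu> n) ^ k) \<le> D ^ k * q ^ (k choose 2)) sequentially"
proof -
  obtain \<delta>\<^sub>1 where \<delta>\<^sub>1: "\<delta>\<^sub>1 > 0" "\<And>k. \<delta>\<^sub>1 ^ k \<le> norm (qpoch w q k)"
    using qpoch_geometric_lower_bound[OF q w] by blast
  obtain \<delta>\<^sub>2 where \<delta>\<^sub>2: "\<delta>\<^sub>2 > 0" "\<And>k. \<delta>\<^sub>2 ^ k \<le> norm (qpoch (of_real q) q k)"
    using qpoch_geometric_lower_bound[OF q of_real_mult_power_neq_1[OF q]] by blast
  have \<delta>: "(\<delta>\<^sub>1 * \<delta>\<^sub>2) ^ k \<le> norm (qpoch w q k * qpoch (of_real q) q k)" for k
    unfolding power_mult_distrib norm_mult using \<delta>\<^sub>1 \<delta>\<^sub>2 by (intro mult_mono) auto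
  have "\<delta>\<^sub>1 * \<delta>\<^sub>2 > 0"
    using \<delta>\<^sub>1 \<delta>\<^sub>2 by simp
  note coeff_le = norm_bhyp_coeff_qpow_neg_nat_scaled_le[OF q _ _ _ _ this \<delta>,
      where as = "map (\<lambda>j. an j n) js" and bs = "map (\<lambda>j. dn j n) js" and \<mu> = "\<mu> n" for n]
  have "eventually (\<lambda>n. dist (\<mu> n) muL < 1) sequentially"
    using \<mu> by (rule tendstoD) simp
  then have "eventually (\<lambda>n. \<bar>\<mu> n\<bar> \<le> \<bar>muL\<bar> + 1) sequentially"
    by eventually_elim (auto simp: dist_real_def)
  moreover have "eventually (\<lambda>n. \<forall>j\<in>set js. norm (an j n) \<le> 1) sequentially"
    by (rule eventually_norm_le_of_tendsto_0[OF an]) simp_all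
  moreover have "eventually (\<lambda>n. \<forall>j\<in>set js. norm (dn j n) \<le> 1/2) sequentially"
    by (rule eventually_norm_le_of_tendsto_0[OF dn]) simp_all
  ultimately have "eventually (\<lambda>n. \<forall>k.
      norm (bhyp_coeff (qpow q (- of_nat n) # map (\<lambda>j. an j n) js) (w # map (\<lambda>j. dn j n) js) q k
            * of_real (q ^ n * \<mu> n) ^ k)
      \<le> (4 ^ length js * (\<bar>muL\<bar> + 1) / (\<delta>\<^sub>1 * \<delta>\<^sub>2)) ^ k * q ^ (k choose 2)) sequentially"
    by eventually_elim (auto intro!: coeff_le[simplified])
  then show ?thesis
    by (rule that)
qed

theorem uniform_limit_bhyp_confluent:
  assumes "bounded K"
  shows "uniform_limit K
    (\<lambda>n z. bhyp (qpow q (- of_nat n) # map (\<lambda>j. an j n) js) (w # map (\<lambda>j. dn j n) js) q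
             (of_real (q ^ n * \<mu> n) * z))
    (\<lambda>z. bhyp [] [w] q (of_real muL * z)) sequentially"
proof -
  obtain D where D: "eventually (\<lambda>n. \<forall>k.
      norm (bhyp_coeff (qpow q (- of_nat n) # map (\<lambda>j. an j n) js) (w # map (\<lambda>j. dn j n) js) q k
            * of_real (q ^ n * \<mu> n) ^ k) \<le> D ^ k * q ^ (k choose 2)) sequentially"
    by (rule bhyp_coeff_confluent_bound)
  have "summable (\<lambda>k. D ^ k * q ^ (k choose 2) * R ^ k)" for R
    using summable_power_mult_power_choose_2[OF q, of "D * R"] by (simp add: power_mult_distrib ac_simps)
  then have "uniform_limit K
      (\<lambda>n z. \<Sum>k. bhyp_coeff (qpow q (- of_nat n) # map (\<lambda>j. an j n) js) (w # map (\<lambda>j. dn j n) js) q k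
                    * of_real (q ^ n * \<mu> n) ^ k * z ^ k)
      (\<lambda>z. \<Sum>k. bhyp_coeff [] [w] q k * of_real muL ^ k * z ^ k) sequentially"
    by (rule uniform_limit_power_series_coeffwise[OF bhyp_coeff_confluent_tendsto D _ assms])
  then show ?thesis
    by (simp only: bhyp_eq_suminf_coeff power_mult_distrib mult.assoc)
qed

end

section \<open>The \<open>q\<close>-Bessel form\<close>

lemma powr_csqrt_powr_cancel:
  fixes q \<alpha> :: real and w :: complex
  assumes q: "0 < q" "q < 1" and w: "w \<noteq> 0"
  shows "w powr (of_real ((1 - \<alpha>) / 2)) * (of_real (1 - q) * csqrt w) powr (of_real (\<alpha> - 1))
      * qpow (1 - q) (1 - of_real \<alpha>) = 1"
proof -
  have "Ln (csqrt w) = Ln w / 2"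
    using w mpi_less_Im_Ln[of w] Im_Ln_le_pi[of w] by (simp add: csqrt_exp_Ln)
  moreover have "Ln (of_real (1 - q) * csqrt w) = of_real (ln (1 - q)) + Ln (csqrt w)"
    using Ln_times_of_real[of "1 - q" "csqrt w"] q w Ln_of_real[of "1 - q"] by simp
  ultimately have "Ln ((1 - of_real q) * csqrt w) = of_real (ln (1 - q)) + Ln w / 2"
    by simp
  then have "w powr (of_real ((1 - \<alpha>) / 2)) * (of_real (1 - q) * csqrt w) powr (of_real (\<alpha> - 1))
            * qpow (1 - q) (1 - of_real \<alpha>)
        = exp (of_real ((1 - \<alpha>) / 2) * Ln w + of_real (\<alpha> - 1) * (of_real (ln (1 - q)) + Ln w / 2)
               + (1 - of_real \<alpha>) * of_real (ln (1 - q)))"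
    using w q by (simp add: powr_def qpow_def exp_add)
  also have "\<dots> = 1"
    by (simp add: field_simps)
  finally show ?thesis .
qed

lemma bhyp_0phi1_eq_qBesselJ2:
  fixes q \<alpha> :: real and w :: complex
  assumes q: "0 < q" "q < 1" and \<alpha>: "\<alpha> \<notin> \<int>\<^sub>\<le>\<^sub>0" and w: "w \<noteq> 0"
  shows "bhyp [] [qpow q (of_real \<alpha>)] q (- w * of_real ((q - 1)^2) * qpow q (of_real \<alpha>))
           = w powr (of_real ((1 - \<alpha>) / 2)) * qGamma q (of_real \<alpha>)
             * qBesselJ2 (of_real (\<alpha> - 1)) (2 * of_real (1 - q) * csqrt w) q"
proof -
  define P where "P = qpoch_inf (of_real q) q"
  define Q where "Q = qpoch_inf (qpow q (of_real \<alpha>)) q"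
  define B where "B = bhyp [] [qpow q (of_real \<alpha>)] q (- w * of_real ((q - 1)^2) * qpow q (of_real \<alpha>))"
  have "P \<noteq> 0"
    unfolding P_def by (rule qpoch_inf_nonzero[OF q of_real_mult_power_neq_1[OF q]])
  have "Q \<noteq> 0"
    unfolding Q_def by (rule qpoch_inf_nonzero[OF q qpow_mult_power_neq_1[OF q \<alpha>]])
  have \<nu>: "(of_real (\<alpha> - 1) + 1 :: complex) = of_real \<alpha>"
    by simp
  have "(2 * of_real (1 - q) * csqrt w) ^ 2 / 4 = (of_real (1 - q))\<^sup>2 * (csqrt w)\<^sup>2"
    unfolding power_mult_distrib by simp
  also have "\<dots> = of_real ((q - 1)\<^sup>2) * w"
    by (simp only: power2_csqrt) (simp add: power2_eq_square algebra_simps)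
  finally have arg: "- qpow q (of_real (\<alpha> - 1) + 1) * (2 * of_real (1 - q) * csqrt w) ^ 2 / 4
      = - w * of_real ((q - 1)^2) * qpow q (of_real \<alpha>)"
    unfolding \<nu> by (simp add: algebra_simps)
  have J: "qBesselJ2 (of_real (\<alpha> - 1)) (2 * of_real (1 - q) * csqrt w) q
     = Q / P * (of_real (1 - q) * csqrt w) powr (of_real (\<alpha> - 1)) * B"
  proof -
    have half: "2 * of_real (1 - q) * csqrt w / 2 = of_real (1 - q) * csqrt w"
      by simp
    show ?thesis
      unfolding qBesselJ2_def arg half B_def unfolding \<nu> Q_def P_def ..
  qed
  have "w powr (of_real ((1 - \<alpha>) / 2)) * qGamma q (of_real \<alpha>)
             * qBesselJ2 (of_real (\<alpha> - 1)) (2 * of_real (1 - q) * csqrt w) q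
      = (w powr (of_real ((1 - \<alpha>) / 2)) * (of_real (1 - q) * csqrt w) powr (of_real (\<alpha> - 1))
            * qpow (1 - q) (1 - of_real \<alpha>)) * (P / Q * (Q / P)) * B"
    unfolding J qGamma_def P_def[symmetric] Q_def[symmetric] by (simp add: algebra_simps)
  also have "\<dots> = B"
    using powr_csqrt_powr_cancel[OF q w] \<open>P \<noteq> 0\<close> \<open>Q \<noteq> 0\<close> by simp
  finally show ?thesis
    unfolding B_def ..
qed

lemma confluent_scaling_tendsto:
  assumes q: "0 < q" "q < 1" and ac: "\<And>j. j \<in> I \<Longrightarrow> a j > 0 \<and> c j > 0"
  shows "(\<lambda>n. q powr \<alpha> * (\<Prod>j\<in>I. qnum_base q (c j) n)
            / (Re (qnum q (of_nat n)) * (\<Prod>j\<in>I. qnum_base q (a j) n)) * (q - 1))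
    \<longlonglongrightarrow> - ((\<Prod>j\<in>I. Re (qnum q (of_real (a j)))) / (\<Prod>j\<in>I. Re (qnum q (of_real (c j)))))
        * (q - 1)\<^sup>2 * q powr \<alpha>"
proof -
  have "(\<lambda>n. q powr \<alpha> * (\<Prod>j\<in>I. qnum_base q (c j) n / qnum_base q (a j) n)
            / Re (qnum q (of_nat n)) * (q - 1))
    \<longlonglongrightarrow> q powr \<alpha> * (\<Prod>j\<in>I. Re (qnum q (of_real (a j))) / Re (qnum q (of_real (c j))))
            / (1 / (1 - q)) * (q - 1)"
    using q ac by (intro tendsto_intros qnum_base_ratio_tendsto Re_qnum_of_nat_tendsto) auto
  moreover have "q powr \<alpha> * (\<Prod>j\<in>I. Re (qnum q (of_real (a j))) / Re (qnum q (of_real (c j))))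
            / (1 / (1 - q)) * (q - 1)
      = - ((\<Prod>j\<in>I. Re (qnum q (of_real (a j)))) / (\<Prod>j\<in>I. Re (qnum q (of_real (c j)))))
        * (q - 1)\<^sup>2 * q powr \<alpha>"
    using q by (simp add: prod_dividef power2_eq_square divide_simps) (simp add: algebra_simps)
  ultimately show ?thesis
    by (simp add: prod_dividef ac_simps)
qed

theorem theorem1:
  fixes q \<alpha> :: real and s :: nat
    and a c :: "nat \<Rightarrow> real" and b d :: "nat \<Rightarrow> complex"
  assumes q: "0 < q" "q < 1"
    and s: "s \<ge> 1"
    and \<alpha>: "\<alpha> \<notin> \<int>\<^sub>\<le>\<^sub>0"
    and ac_pos: "\<And>j. j \<in> {1..s-1} \<Longrightarrow> a j > 0 \<and> c j > 0"
    and b_cond: "\<And>j n. j \<in> {1..s-1} \<Longrightarrow> n \<ge> 1 \<Longrightarrow> a j * real n + Re (b j) \<notin> \<int>\<^sub>\<le>\<^sub>0"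
    and d_cond: "\<And>j n. j \<in> {1..s-1} \<Longrightarrow> n \<ge> 1 \<Longrightarrow> c j * real n + Re (d j) \<notin> \<int>\<^sub>\<le>\<^sub>0"
  defines "A \<equiv> (\<Prod>j\<in>{1..s-1}. Re (qnum q (of_real (a j)))) / (\<Prod>j\<in>{1..s-1}. Re (qnum q (of_real (c j))))"
    and "lam \<equiv> (\<lambda>n::nat. q powr (real n + \<alpha>) * (\<Prod>j\<in>{1..s-1}. qnum_base q (c j) n)
                 / (Re (qnum q (of_nat n)) * (\<Prod>j\<in>{1..s-1}. qnum_base q (a j) n)) * (q - 1))"
  shows "(\<forall>K. compact K \<longrightarrow>
           uniform_limit K
             (\<lambda>n z. bhyp (qpow q (- of_nat n) # map (\<lambda>j. qpow q (of_real (a j * real n) + b j)) [1..<s])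
                          (qpow q (of_real \<alpha>) # map (\<lambda>j. qpow q (of_real (c j * real n) + d j)) [1..<s])
                          q (of_real (lam n) * z))
             (\<lambda>z. bhyp [] [qpow q (of_real \<alpha>)] q (- of_real A * z * of_real ((q - 1)^2) * qpow q (of_real \<alpha>)))
             sequentially)
       \<and> (\<forall>z. z \<noteq> 0 \<longrightarrow>
           bhyp [] [qpow q (of_real \<alpha>)] q (- of_real A * z * of_real ((q - 1)^2) * qpow q (of_real \<alpha>))
           = (of_real A * z) powr (of_real ((1 - \<alpha>) / 2)) * qGamma q (of_real \<alpha>)
             * qBesselJ2 (of_real (\<alpha> - 1)) (2 * of_real (1 - q) * csqrt (of_real A * z)) q)"
proof -
  define \<mu> where "\<mu> n = q powr \<alpha> * (\<Prod>j\<in>{1..s-1}. qnum_base q (c j) n)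
      / (Re (qnum q (of_nat n)) * (\<Prod>j\<in>{1..s-1}. qnum_base q (a j) n)) * (q - 1)" for n
  define muL where "muL = - A * (q - 1)\<^sup>2 * q powr \<alpha>"
  have lam: "lam = (\<lambda>n. q ^ n * \<mu> n)"
    unfolding lam_def \<mu>_def using q by (simp add: powr_add powr_realpow ac_simps)
  have \<mu>: "\<mu> \<longlonglongrightarrow> muL"
    unfolding \<mu>_def muL_def A_def using q ac_pos by (rule confluent_scaling_tendsto)
  have "A > 0"
    unfolding A_def using q ac_pos by (auto intro!: divide_pos_pos prod_pos Re_qnum_pos)
  have limit_arg: "- of_real A * z * of_real ((q - 1)^2) * qpow q (of_real \<alpha>) = of_real muL * z" for z
    unfolding muL_def using q by (simp add: qpow_of_real)
  show ?thesis
    apply (intro conjI allI impI)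
    subgoal for K
      unfolding lam limit_arg using q ac_pos s
      by (intro uniform_limit_bhyp_confluent qpow_mult_power_neq_1 \<alpha> \<mu> compact_imp_bounded
          qpow_linear_tendsto_0) auto
    subgoal for z
      using bhyp_0phi1_eq_qBesselJ2[OF q \<alpha>, of "of_real A * z"] \<open>A > 0\<close> by simp
    done
qed

end
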